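(* Let $m$ be a positive integer and let $p$ be a positive integer which is a multiple of $m$ if $m$ is odd and a multiple of $2m$ if $m$ is even. Let $S$ be a $p$-periodic sequence of elements of $\mathbb{Z}/m\mathbb{Z}$ whose orbit is $(p,p)$-periodic. Then the triangles $\nabla S[\lambda p]$ are balanced for all non-negative integers $\lambda$ if and only if there exist two distinct positive integers $\lambda_1,\lambda_2$ such that $\nabla S[\lambda_1p]$ and $\nabla S[\lambda_2p]$ are balanced.
   Context: A sequence $S=(u_j)_{j\in\mathbb{Z}}$ is $p$-periodic if $u_{j+p}=u_j$ for all $j$. $S[n]=(u_0,\dots,u_{n-1})$. The orbit of $S$ is $(a_{i,j})_{(i,j)\in\mathbb{N}\times\mathbb{Z}}$ with $a_{0,j}=u_j$, $a_{i,j}=-a_{i-1,j}-a_{i-1,j+1}$ for $i\ge1$; it is $(p,q)$-periodic if $a_{i+q,j}=a_{i,j+p}=a_{i,j}$ for all $(i,j)$. For a finite sequence $(u_0,\dots,u_{n-1})$, $\nabla(u_0,\dots,u_{n-1})=(a_{i,j})_{i,j\ge0,i+j<n}$ defined by the same rule; it is balanced if every element of $\mathbb{Z}/m\mathbb{Z}$ occurs the same number of times among its entries. *)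

theory Defs
  imports Main
begin

text \<open>Elements of Z/mZ are represented by their canonical representatives in {0..<m}
  (integers); arithmetic is taken mod m.\<close>

fun orbit :: "int \<Rightarrow> (int \<Rightarrow> int) \<Rightarrow> nat \<Rightarrow> int \<Rightarrow> int" where
  "orbit m u 0 j = u j"
| "orbit m u (Suc i) j = (- orbit m u i j - orbit m u i (j + 1)) mod m"

definition periodic_seq :: "nat \<Rightarrow> (int \<Rightarrow> int) \<Rightarrow> bool" where
  "periodic_seq p u \<longleftrightarrow> (\<forall>j. u (j + int p) = u j)"

definition orbit_periodic :: "int \<Rightarrow> nat \<Rightarrow> nat \<Rightarrow> (int \<Rightarrow> int) \<Rightarrow> bool" where
  "orbit_periodic m p q u \<longleftrightarrow>
     (\<forall>i j. orbit m u (i + q) j = orbit m u i j \<and> orbit m u i (j + int p) = orbit m u i j)"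

definition prefix_seq :: "(int \<Rightarrow> int) \<Rightarrow> nat \<Rightarrow> int list" where
  "prefix_seq u n = map (\<lambda>j. u (int j)) [0..<n]"

fun nabla :: "int \<Rightarrow> int list \<Rightarrow> nat \<Rightarrow> nat \<Rightarrow> int" where
  "nabla m xs 0 j = xs ! j"
| "nabla m xs (Suc i) j = (- nabla m xs i j - nabla m xs i (Suc j)) mod m"

definition triangle_positions :: "nat \<Rightarrow> (nat \<times> nat) set" where
  "triangle_positions n = {(i, j). i + j < n}"

definition balanced :: "int \<Rightarrow> int list \<Rightarrow> bool" where
  "balanced m xs \<longleftrightarrow>
     (\<forall>r\<in>{0..<m}. \<forall>s\<in>{0..<m}.
        card {(i, j) \<in> triangle_positions (length xs). nabla m xs i j = r}
      = card {(i, j) \<in> triangle_positions (length xs). nabla m xs i j = s})"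

end

theory Submission
  imports Defs
begin

text \<open>Since \<open>\<nabla>S[n]\<close> is the part of the orbit of \<open>S\<close> above the antidiagonal \<open>i + j < n\<close>,
  and the orbit is \<open>(p,p)\<close>-periodic, the triangle of side \<open>\<lambda>p\<close> is tiled by \<open>\<lambda>\<close> copies of the
  triangle of side \<open>p\<close> and \<open>\<lambda>(\<lambda> - 1)/2\<close> copies of the \<open>p \<times> p\<close> square. Hence the number of
  occurrences of a residue \<open>r\<close> in \<open>\<nabla>S[\<lambda>p]\<close> is \<open>\<lambda> T\<^sub>r + (\<lambda> choose 2) Q\<^sub>r\<close>, where \<open>T\<^sub>r\<close> and \<open>Q\<^sub>r\<close>
  count \<open>r\<close> in the triangle and in the square. Two distinct positive values of \<open>\<lambda>\<close> determine
  \<open>T\<^sub>r\<close> and \<open>Q\<^sub>r\<close> (the system has determinant \<open>\<lambda>\<^sub>1\<lambda>\<^sub>2(\<lambda>\<^sub>2 - \<lambda>\<^sub>1)/2 \<noteq> 0\<close>), so balance for two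
  of them forces \<open>T\<^sub>r\<close> and \<open>Q\<^sub>r\<close> to be independent of \<open>r\<close>, i.e. balance for all \<open>\<lambda>\<close>.\<close>

lemma sum_lessThan_add:
  fixes f :: "nat \<Rightarrow> 'a::comm_monoid_add"
  shows "(\<Sum>i<a + b. f i) = (\<Sum>i<a. f i) + (\<Sum>i<b. f (a + i))"
  by (induction b) (simp_all add: add.assoc)

lemma sum_periodic_shift:
  fixes f :: "nat \<Rightarrow> 'a::comm_monoid_add"
  assumes periodic: "\<And>j. f (j + p) = f j"
  shows "(\<Sum>j<p. f (c + j)) = (\<Sum>j<p. f j)"
proof (induction c)
  case (Suc c)
  show ?case
  proof (cases p)
    case (Suc q)
    have "(\<Sum>j<p. f (Suc c + j)) = (\<Sum>j<q. f (Suc c + j)) + f (c + p)"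
      using Suc by simp
    also have "f (c + p) = f c"
      using periodic[of c] by (simp add: add.commute)
    also have "(\<Sum>j<q. f (Suc c + j)) + f c = (\<Sum>j<p. f (c + j))"
      unfolding Suc sum.lessThan_Suc_shift by (simp add: ac_simps)
    finally show ?thesis
      using Suc.IH by simp
  qed simp
qed simp

lemma sum_periodic_multiple:
  fixes f :: "nat \<Rightarrow> 'a::semiring_1"
  assumes periodic: "\<And>j. f (j + p) = f j"
  shows "(\<Sum>j<l * p. f (c + j)) = of_nat l * (\<Sum>j<p. f j)"
proof (induction l arbitrary: c)
  case (Suc l)
  have "(\<Sum>j<Suc l * p. f (c + j)) = (\<Sum>j<p. f (c + j)) + (\<Sum>j<l * p. f ((c + p) + j))"
    using sum_lessThan_add[of "\<lambda>j. f (c + j)" p "l * p"] by (simp add: add.assoc)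
  then show ?case
    using Suc.IH sum_periodic_shift[of f p, OF periodic] by (simp add: ring_distribs)
qed simp

definition triangle_sum :: "(nat \<Rightarrow> nat \<Rightarrow> 'a::comm_monoid_add) \<Rightarrow> nat \<Rightarrow> 'a" where
  "triangle_sum h n = (\<Sum>i<n. \<Sum>j<n - i. h i j)"

definition square_sum :: "(nat \<Rightarrow> nat \<Rightarrow> 'a::comm_monoid_add) \<Rightarrow> nat \<Rightarrow> 'a" where
  "square_sum h n = (\<Sum>i<n. \<Sum>j<n. h i j)"

lemma triangle_sum_Suc_multiple:
  fixes h :: "nat \<Rightarrow> nat \<Rightarrow> 'a::comm_semiring_1"
  assumes periodic_row: "\<And>i j. h (i + p) j = h i j"
    and periodic_col: "\<And>i j. h i (j + p) = h i j"
  shows "triangle_sum h (Suc l * p)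
    = triangle_sum h (l * p) + triangle_sum h p + of_nat l * square_sum h p"
proof -
  have top_row: "(\<Sum>j<p + l * p - i. h i j) = (\<Sum>j<p - i. h i j) + of_nat l * (\<Sum>j<p. h i j)"
    if "i < p" for i
  proof -
    have "(\<Sum>j<p + l * p - i. h i j) = (\<Sum>j<p - i. h i j) + (\<Sum>j<l * p. h i ((p - i) + j))"
      using that sum_lessThan_add[of "h i" "p - i" "l * p"] by (simp add: add.commute)
    then show ?thesis
      using sum_periodic_multiple[of "h i" p "p - i" l] periodic_col by simp
  qed
  have "triangle_sum h (Suc l * p)
      = (\<Sum>i<p. \<Sum>j<p + l * p - i. h i j) + (\<Sum>i<l * p. \<Sum>j<l * p - i. h (p + i) j)"
    unfolding triangle_sum_def
    using sum_lessThan_add[of "\<lambda>i. \<Sum>j<p + l * p - i. h i j" p "l * p"] by simp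
  also have "(\<Sum>i<l * p. \<Sum>j<l * p - i. h (p + i) j) = triangle_sum h (l * p)"
    unfolding triangle_sum_def using periodic_row by (simp add: add.commute)
  also have "(\<Sum>i<p. \<Sum>j<p + l * p - i. h i j) = triangle_sum h p + of_nat l * square_sum h p"
    unfolding triangle_sum_def square_sum_def
    by (simp add: top_row sum.distrib sum_distrib_left)
  finally show ?thesis
    by (simp add: algebra_simps)
qed

lemma triangle_sum_multiple:
  fixes h :: "nat \<Rightarrow> nat \<Rightarrow> 'a::comm_semiring_1"
  assumes "\<And>i j. h (i + p) j = h i j" and "\<And>i j. h i (j + p) = h i j"
  shows "triangle_sum h (l * p) = of_nat l * triangle_sum h p + of_nat (l choose 2) * square_sum h p"
proof (induction l)
  case 0
  then show ?case by (simp add: triangle_sum_def binomial_eq_0)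
next
  case (Suc l)
  have "Suc l choose 2 = l + (l choose 2)"
    by (simp add: numeral_2_eq_2)
  then show ?case
    using Suc.IH triangle_sum_Suc_multiple[of h p l, OF assms] by (simp add: algebra_simps)
qed

lemma binomial_combination_cancel:
  fixes a b c d l1 l2 :: nat
  assumes "0 < l1" "0 < l2" "l1 \<noteq> l2"
    and eq1: "l1 * a + (l1 choose 2) * b = l1 * c + (l1 choose 2) * d"
    and eq2: "l2 * a + (l2 choose 2) * b = l2 * c + (l2 choose 2) * d"
  shows "a = c \<and> b = d"
proof -
  define x where "x = int a - int c"
  define y where "y = int b - int d"
  have reduced: "2 * x + (int l - 1) * y = 0"
    if "0 < l" "l * a + (l choose 2) * b = l * c + (l choose 2) * d" for l
  proof -
    have "2 * (l choose 2) = l * (l - 1)"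
      by (cases l) (simp_all add: choose_two)
    from arg_cong[OF this, of int]
    have double_choose: "2 * int (l choose 2) = int l * (int l - 1)"
      using \<open>0 < l\<close> by simp
    have "int (l * a + (l choose 2) * b) = int (l * c + (l choose 2) * d)"
      using that(2) by simp
    then have "2 * (int l * x) + (2 * int (l choose 2)) * y = 0"
      unfolding x_def y_def by (simp add: algebra_simps)
    then have "int l * (2 * x + (int l - 1) * y) = 0"
      unfolding double_choose by (simp add: algebra_simps)
    with \<open>0 < l\<close> show ?thesis
      by simp
  qed
  have "(int l1 - int l2) * y = (2 * x + (int l1 - 1) * y) - (2 * x + (int l2 - 1) * y)"
    by (simp add: algebra_simps)
  also have "\<dots> = 0"
    using reduced[OF \<open>0 < l1\<close> eq1] reduced[OF \<open>0 < l2\<close> eq2] by simp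
  finally have "(int l1 - int l2) * y = 0" .
  with \<open>l1 \<noteq> l2\<close> have "y = 0"
    by simp
  moreover from this have "x = 0"
    using reduced[OF \<open>0 < l1\<close> eq1] by simp
  ultimately show ?thesis
    unfolding x_def y_def by simp
qed

lemma binomial_combinations_eq_iff:
  fixes R :: "'r set" and T Q :: "'r \<Rightarrow> nat"
  defines "E l \<equiv> \<forall>r\<in>R. \<forall>s\<in>R. l * T r + (l choose 2) * Q r = l * T s + (l choose 2) * Q s"
  shows "(\<forall>l. E l) \<longleftrightarrow> (\<exists>l1 l2. 0 < l1 \<and> 0 < l2 \<and> l1 \<noteq> l2 \<and> E l1 \<and> E l2)"
proof
  assume "\<forall>l. E l"
  then show "\<exists>l1 l2. 0 < l1 \<and> 0 < l2 \<and> l1 \<noteq> l2 \<and> E l1 \<and> E l2"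
    by (intro exI[of _ 1] exI[of _ 2]) simp
next
  assume "\<exists>l1 l2. 0 < l1 \<and> 0 < l2 \<and> l1 \<noteq> l2 \<and> E l1 \<and> E l2"
  then obtain l1 l2 where "0 < l1" "0 < l2" "l1 \<noteq> l2" "E l1" "E l2"
    by blast
  have "T r = T s \<and> Q r = Q s" if "r \<in> R" "s \<in> R" for r s
    using binomial_combination_cancel[OF \<open>0 < l1\<close> \<open>0 < l2\<close> \<open>l1 \<noteq> l2\<close>]
      \<open>E l1\<close> \<open>E l2\<close> that unfolding E_def by blast
  then show "\<forall>l. E l"
    unfolding E_def by metis
qed

lemma card_triangle_positions:
  "card {(i, j) \<in> triangle_positions n. P i j} = triangle_sum (\<lambda>i j. of_bool (P i j)) n"
proof -
  have "{(i, j) \<in> triangle_positions n. P i j} = (SIGMA i:{..<n}. {..<n - i} \<inter> {j. P i j})"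
    by (auto simp: triangle_positions_def)
  then show ?thesis
    by (simp add: triangle_sum_def)
qed

lemma nabla_prefix_seq:
  "i + j < n \<Longrightarrow> nabla m (prefix_seq u n) i j = orbit m u i (int j)"
  by (induction i arbitrary: j) (simp_all add: prefix_seq_def add.commute)

lemma balanced_prefix_seq_iff:
  "balanced m (prefix_seq u n) \<longleftrightarrow> (\<forall>r\<in>{0..<m}. \<forall>s\<in>{0..<m}.
     triangle_sum (\<lambda>i j. of_bool (orbit m u i (int j) = r)) n
       = (triangle_sum (\<lambda>i j. of_bool (orbit m u i (int j) = s)) n :: nat))"
proof -
  have "{(i, j) \<in> triangle_positions n. nabla m (prefix_seq u n) i j = r}
      = {(i, j) \<in> triangle_positions n. orbit m u i (int j) = r}" for r
    using nabla_prefix_seq by (fastforce simp: triangle_positions_def)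
  then show ?thesis
    unfolding balanced_def by (simp add: card_triangle_positions prefix_seq_def)
qed

theorem proposition14:
  fixes m :: int and p :: nat and u :: "int \<Rightarrow> int"
  assumes m_pos: "m > 0"
    and p_pos: "p > 0"
    and p_odd: "odd m \<Longrightarrow> m dvd int p"
    and p_even: "even m \<Longrightarrow> 2 * m dvd int p"
    and vals: "\<And>j. u j \<in> {0..<m}"
    and per: "periodic_seq p u"
    and orb_per: "orbit_periodic m p p u"
  shows "(\<forall>l::nat. balanced m (prefix_seq u (l * p))) \<longleftrightarrow>
         (\<exists>l1 l2::nat. 0 < l1 \<and> 0 < l2 \<and> l1 \<noteq> l2 \<and>
            balanced m (prefix_seq u (l1 * p)) \<and> balanced m (prefix_seq u (l2 * p)))"
proof -
  define count :: "int \<Rightarrow> nat \<Rightarrow> nat \<Rightarrow> nat"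
    where "count r i j = of_bool (orbit m u i (int j) = r)" for r i j
  define T where "T r = triangle_sum (count r) p" for r
  define Q where "Q r = square_sum (count r) p" for r
  have "count r (i + p) j = count r i j" "count r i (j + p) = count r i j" for r i j
    using orb_per by (simp_all add: count_def orbit_periodic_def)
  then have "triangle_sum (count r) (l * p) = l * T r + (l choose 2) * Q r" for r l
    unfolding T_def Q_def using triangle_sum_multiple[of "count r" p l] by simp
  then have "balanced m (prefix_seq u (l * p)) \<longleftrightarrow>
      (\<forall>r\<in>{0..<m}. \<forall>s\<in>{0..<m}. l * T r + (l choose 2) * Q r = l * T s + (l choose 2) * Q s)" for l
    by (simp add: balanced_prefix_seq_iff flip: count_def)
  then show ?thesis
    using binomial_combinations_eq_iff[of "{0..<m}" T Q] by presburger
qed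

end
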